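(* Let $d\ge1$, let $\zeta=\{\zeta_k\}_{k\in\mathbb{Z}^d}$ be a stationary random field with $\mathrm{E}(\zeta_0)=0$ and $\mathrm{Var}(\zeta_0)<\infty$, and let $\delta>0$. Suppose that for all $\psi_1,\psi_2\in\mathscr{U}$ with $\mathrm{sep}(\mathrm{supp}[\psi_1],\mathrm{supp}[\psi_2])\ge\delta$ the pair $(S_n(\psi_1),S_n(\psi_2))$ is asymptotically independent as $n\to\infty$. Then for every integer $N\ge2$ and all $\varphi_1,\ldots,\varphi_N\in\mathscr{U}$ with $\mathrm{sep}(\mathrm{supp}[\varphi_i],\mathrm{supp}[\varphi_j])\ge\delta$ for all $1\le i\ne j\le N$, the vector $(S_n(\varphi_1),\ldots,S_n(\varphi_N))$ is asymptotically independent as $n\to\infty$.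
   Context: $\mathscr{U}$ is the set of finite linear combinations of indicator functions of boxes $(a_1,b_1]\times\cdots\times(a_d,b_d]\subset\mathbb{R}^d$ with $a_i<b_i$ real; $\mathrm{supp}[\varphi]$ is the support of $\varphi$. For $A,B\subset\mathbb{R}^d$, $\mathrm{sep}(A,B)=\inf\{\max_{1\le i\le d}|x_i-y_i|: x\in A,y\in B\}$. For $\varphi\in\mathscr{U}$, $S_n(\varphi):=n^{-d/2}\sum_{k\in\mathbb{Z}^d}\zeta_k\varphi(k/n)$. A sequence of random vectors $(X_{1,n},\ldots,X_{N,n})$ ($N\ge2$) is asymptotically independent as $n\to\infty$ if for all real $\xi_1,\ldots,\xi_N$, $\lim_{n\to\infty}\big|\mathrm{E}[e^{i\xi_1X_{1,n}+\cdots+i\xi_NX_{N,n}}]-\prod_{j=1}^N\mathrm{E}[e^{i\xi_jX_{j,n}}]\big|=0$. *)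

theory Defs
  imports "HOL-Probability.Probability"
begin

text \<open>Points of R^d are \<open>real ^ 'd\<close>, lattice points of Z^d are \<open>int ^ 'd\<close>,
  with d = CARD('d) \<ge> 1.\<close>

definition box_oc :: "real ^ 'd \<Rightarrow> real ^ 'd \<Rightarrow> (real ^ 'd) set" where
  "box_oc a b = {x. \<forall>i. a $ i < x $ i \<and> x $ i \<le> b $ i}"

definition U_fun :: "(real ^ 'd \<Rightarrow> real) set" where
  "U_fun = {\<phi>. \<exists>(m::nat) (c::nat \<Rightarrow> real) (a::nat \<Rightarrow> real ^ 'd) b.
              (\<forall>j<m. \<forall>i. a j $ i < b j $ i) \<and>
              \<phi> = (\<lambda>x. \<Sum>j<m. c j * indicator (box_oc (a j) (b j)) x)}"

definition supp :: "(real ^ 'd \<Rightarrow> real) \<Rightarrow> (real ^ 'd) set" where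
  "supp \<phi> = {x. \<phi> x \<noteq> 0}"

text \<open>Separation in the sup-norm; the infimum is taken in the extended reals so that
  the infimum of the empty set is +\<infinity>.\<close>
definition sep :: "(real ^ 'd) set \<Rightarrow> (real ^ 'd) set \<Rightarrow> ereal" where
  "sep A B = (INF p \<in> A \<times> B. ereal (Max (range (\<lambda>i. \<bar>fst p $ i - snd p $ i\<bar>))))"

definition scale_lattice :: "int ^ 'd \<Rightarrow> nat \<Rightarrow> real ^ 'd" where
  "scale_lattice k n = (\<chi> i. real_of_int (k $ i) / real n)"

text \<open>S_n(\<phi>) = n^{-d/2} \<Sum>_{k \<in> Z^d} \<zeta>_k \<phi>(k/n); for \<phi> \<in> U only finitely many terms are nonzero.\<close>
definition S_n :: "(int ^ 'd \<Rightarrow> 'a \<Rightarrow> real) \<Rightarrow> nat \<Rightarrow> (real ^ 'd \<Rightarrow> real) \<Rightarrow> 'a \<Rightarrow> real" where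
  "S_n \<zeta> n \<phi> \<omega> = real n powr (- real CARD('d) / 2) *
      (\<Sum>k\<in>{k. \<phi> (scale_lattice k n) \<noteq> 0}. \<zeta> k \<omega> * \<phi> (scale_lattice k n))"

definition asymp_indep :: "'a measure \<Rightarrow> nat \<Rightarrow> (nat \<Rightarrow> nat \<Rightarrow> 'a \<Rightarrow> real) \<Rightarrow> bool" where
  "asymp_indep M N X \<longleftrightarrow> (\<forall>\<xi>::nat \<Rightarrow> real.
     (\<lambda>n. cmod ((LINT \<omega>|M. exp (\<i> * complex_of_real (\<Sum>j<N. \<xi> j * X j n \<omega>)))
               - (\<Prod>j<N. LINT \<omega>|M. exp (\<i> * complex_of_real (\<xi> j * X j n \<omega>)))))
     \<longlonglongrightarrow> 0)"

definition stationary_field :: "'a measure \<Rightarrow> (int ^ 'd \<Rightarrow> 'a \<Rightarrow> real) \<Rightarrow> bool" where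
  "stationary_field M \<zeta> \<longleftrightarrow> (\<forall>F h. finite F \<longrightarrow>
     distr M (Pi\<^sub>M F (\<lambda>_. borel)) (\<lambda>\<omega>. \<lambda>k\<in>F. \<zeta> (k + h) \<omega>) =
     distr M (Pi\<^sub>M F (\<lambda>_. borel)) (\<lambda>\<omega>. \<lambda>k\<in>F. \<zeta> k \<omega>))"

end

theory Submission
  imports Defs
begin

text \<open>Since \<open>\<phi> \<mapsto> S_n(\<phi>)\<close> is linear on \<open>\<U>\<close>,
  \<open>\<Sum>\<^sub>j\<^sub><\<^sub>N \<xi>\<^sub>j S_n(\<phi>\<^sub>j) = S_n(\<psi>)\<close> with \<open>\<psi> = \<Sum>\<^sub>j\<^sub><\<^sub>N \<xi>\<^sub>j \<phi>\<^sub>j \<in> \<U>\<close>, and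
  \<open>supp \<psi>\<close> lies in the union of the \<open>supp \<phi>\<^sub>j\<close>, so \<open>\<psi>\<close> and \<open>\<xi>\<^sub>N \<phi>\<^sub>N\<close> are still
  \<open>\<delta>\<close>-separated. The pair hypothesis thus factorises the characteristic function of
  \<open>\<Sum>\<^sub>j\<^sub>\<le>\<^sub>N \<xi>\<^sub>j S_n(\<phi>\<^sub>j)\<close> asymptotically into those of \<open>S_n(\<psi>)\<close> and
  \<open>\<xi>\<^sub>N S_n(\<phi>\<^sub>N)\<close>, and the induction hypothesis factorises the first one further;
  the errors add up because characteristic functions are bounded by \<open>1\<close>.\<close>

lemma norm_integral_iexp_le_1:
  assumes "prob_space M"
  shows "cmod (LINT \<omega>|M. iexp (f \<omega>)) \<le> 1"
proof -
  have "cmod (LINT \<omega>|M. iexp (f \<omega>)) \<le> (LINT \<omega>|M. cmod (iexp (f \<omega>)))"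
    by (rule integral_norm_bound)
  also have "\<dots> = 1"
    using assms by (simp add: prob_space.prob_space)
  finally show ?thesis .
qed

lemma norm_diff_mult_le_telescope:
  fixes a b c p :: complex
  assumes "cmod c \<le> 1"
  shows "cmod (a - p * c) \<le> cmod (a - b * c) + cmod (b - p)"
proof -
  have "cmod (a - p * c) \<le> cmod (a - b * c) + cmod ((b - p) * c)"
    using norm_triangle_ineq[of "a - b * c" "(b - p) * c"] by (simp add: algebra_simps)
  also have "cmod ((b - p) * c) \<le> cmod (b - p)"
    using assms by (simp add: norm_mult mult_left_le)
  finally show ?thesis by simp
qed

lemma asymp_indep_eventually_cong:
  assumes "eventually (\<lambda>n. \<forall>j<N. X j n = Y j n) sequentially"
  shows "asymp_indep M N X \<longleftrightarrow> asymp_indep M N Y"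
  unfolding asymp_indep_def
proof (intro iff_allI tendsto_cong)
  fix \<xi> :: "nat \<Rightarrow> real"
  show "\<forall>\<^sub>F n in sequentially.
      cmod ((LINT \<omega>|M. iexp (\<Sum>j<N. \<xi> j * X j n \<omega>)) - (\<Prod>j<N. LINT \<omega>|M. iexp (\<xi> j * X j n \<omega>))) =
      cmod ((LINT \<omega>|M. iexp (\<Sum>j<N. \<xi> j * Y j n \<omega>)) - (\<Prod>j<N. LINT \<omega>|M. iexp (\<xi> j * Y j n \<omega>)))"
    using assms
  proof eventually_elim
    case (elim n)
    then have "(\<Sum>j<N. \<xi> j * X j n \<omega>) = (\<Sum>j<N. \<xi> j * Y j n \<omega>)" for \<omega>
      by (intro sum.cong) auto
    moreover have "(\<Prod>j<N. LINT \<omega>|M. iexp (\<xi> j * X j n \<omega>)) = (\<Prod>j<N. LINT \<omega>|M. iexp (\<xi> j * Y j n \<omega>))"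
      using elim by (intro prod.cong) auto
    ultimately show ?case by presburger
  qed
qed

lemma asymp_indep_SucI:
  assumes "prob_space M"
    and indep: "asymp_indep M N X"
    and pair_indep: "\<And>\<xi>. asymp_indep M 2
          (\<lambda>j n \<omega>. if j = 0 then \<Sum>i<N. \<xi> i * X i n \<omega> else \<xi> N * X N n \<omega>)"
  shows "asymp_indep M (Suc N) X"
  unfolding asymp_indep_def
proof
  fix \<xi> :: "nat \<Rightarrow> real"
  define ch where "ch f = (LINT \<omega>|M. iexp (f \<omega>))" for f :: "'a \<Rightarrow> real"
  define front where "front n \<omega> = (\<Sum>i<N. \<xi> i * X i n \<omega>)" for n \<omega>
  define extra where "extra n \<omega> = \<xi> N * X N n \<omega>" for n \<omega>
  have pair_lim: "(\<lambda>n. cmod (ch (\<lambda>\<omega>. front n \<omega> + extra n \<omega>) - ch (front n) * ch (extra n))) \<longlonglongrightarrow> 0"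
    using pair_indep[of \<xi>, unfolded asymp_indep_def, rule_format, of "\<lambda>_. 1"]
    by (simp add: numeral_2_eq_2 ch_def front_def extra_def)
  have front_lim: "(\<lambda>n. cmod (ch (front n) - (\<Prod>j<N. ch (\<lambda>\<omega>. \<xi> j * X j n \<omega>)))) \<longlonglongrightarrow> 0"
    using indep[unfolded asymp_indep_def, rule_format, of \<xi>] by (simp add: ch_def front_def)
  have bound: "cmod (ch (\<lambda>\<omega>. front n \<omega> + extra n \<omega>) - (\<Prod>j<N. ch (\<lambda>\<omega>. \<xi> j * X j n \<omega>)) * ch (extra n))
      \<le> cmod (ch (\<lambda>\<omega>. front n \<omega> + extra n \<omega>) - ch (front n) * ch (extra n))
        + cmod (ch (front n) - (\<Prod>j<N. ch (\<lambda>\<omega>. \<xi> j * X j n \<omega>)))" for n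
    by (rule norm_diff_mult_le_telescope)
      (simp add: ch_def norm_integral_iexp_le_1[OF \<open>prob_space M\<close>])
  have "(\<lambda>n. cmod (ch (\<lambda>\<omega>. front n \<omega> + extra n \<omega>) - (\<Prod>j<N. ch (\<lambda>\<omega>. \<xi> j * X j n \<omega>)) * ch (extra n)))
      \<longlonglongrightarrow> 0"
    using bound by (intro tendsto_sandwich[OF _ _ tendsto_const tendsto_add_zero[OF pair_lim front_lim]]) auto
  then show "(\<lambda>n. cmod ((LINT \<omega>|M. iexp (\<Sum>j<Suc N. \<xi> j * X j n \<omega>))
      - (\<Prod>j<Suc N. LINT \<omega>|M. iexp (\<xi> j * X j n \<omega>)))) \<longlonglongrightarrow> 0"
    by (simp add: ch_def front_def extra_def)
qed

lemma U_funE: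
  fixes \<phi> :: "real ^ 'd \<Rightarrow> real"
  assumes "\<phi> \<in> U_fun"
  obtains m :: nat and c :: "nat \<Rightarrow> real" and a b :: "nat \<Rightarrow> real ^ 'd"
  where "\<forall>j<m. \<forall>i. a j $ i < b j $ i"
    and "\<phi> = (\<lambda>x. \<Sum>j<m. c j * indicator (box_oc (a j) (b j)) x)"
  using assms unfolding U_fun_def by blast

lemma U_fun_zero: "(\<lambda>x. 0) \<in> U_fun"
  unfolding U_fun_def mem_Collect_eq by (rule exI[of _ "0 :: nat"]) simp

lemma U_fun_scale:
  fixes \<phi> :: "real ^ 'd \<Rightarrow> real"
  assumes "\<phi> \<in> U_fun"
  shows "(\<lambda>x. c * \<phi> x) \<in> U_fun"
proof -
  obtain m c' and a b :: "nat \<Rightarrow> real ^ 'd" where ab: "\<forall>j<m. \<forall>i. a j $ i < b j $ i"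
    and \<phi>: "\<phi> = (\<lambda>x. \<Sum>j<m. c' j * indicator (box_oc (a j) (b j)) x)"
    using assms by (rule U_funE)
  have "(\<lambda>x. c * \<phi> x) = (\<lambda>x. \<Sum>j<m. (c * c' j) * indicator (box_oc (a j) (b j)) x)"
    unfolding \<phi> by (simp only: sum_distrib_left mult.assoc)
  with ab show ?thesis unfolding U_fun_def mem_Collect_eq by (intro exI conjI)
qed

lemma sum_lessThan_add_split:
  "(\<Sum>j<m + m'. f j) = (\<Sum>j<m. f j) + (\<Sum>j<m'. f (m + j))" for m m' :: nat
  by (induction m') (auto simp: add.assoc)

lemma U_fun_add:
  fixes \<phi> \<psi> :: "real ^ 'd \<Rightarrow> real"
  assumes "\<phi> \<in> U_fun" "\<psi> \<in> U_fun"
  shows "(\<lambda>x. \<phi> x + \<psi> x) \<in> U_fun"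
proof -
  obtain m c and a b :: "nat \<Rightarrow> real ^ 'd" where ab: "\<forall>j<m. \<forall>i. a j $ i < b j $ i"
    and \<phi>: "\<phi> = (\<lambda>x. \<Sum>j<m. c j * indicator (box_oc (a j) (b j)) x)"
    using assms(1) by (rule U_funE)
  obtain m' c' and a' b' :: "nat \<Rightarrow> real ^ 'd" where ab': "\<forall>j<m'. \<forall>i. a' j $ i < b' j $ i"
    and \<psi>: "\<psi> = (\<lambda>x. \<Sum>j<m'. c' j * indicator (box_oc (a' j) (b' j)) x)"
    using assms(2) by (rule U_funE)
  define c'' where "c'' j = (if j < m then c j else c' (j - m))" for j
  define a'' where "a'' j = (if j < m then a j else a' (j - m))" for j
  define b'' where "b'' j = (if j < m then b j else b' (j - m))" for j
  have "\<forall>j<m + m'. \<forall>i. a'' j $ i < b'' j $ i"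
    using ab ab' by (auto simp: a''_def b''_def)
  moreover have "(\<lambda>x. \<phi> x + \<psi> x) =
      (\<lambda>x. \<Sum>j<m + m'. c'' j * indicator (box_oc (a'' j) (b'' j)) x)"
    unfolding sum_lessThan_add_split \<phi> \<psi> a''_def b''_def c''_def by simp
  ultimately show ?thesis unfolding U_fun_def mem_Collect_eq by (intro exI conjI)
qed

lemma U_fun_lincomb:
  assumes "finite J" "\<And>j. j \<in> J \<Longrightarrow> \<phi> j \<in> U_fun"
  shows "(\<lambda>x. \<Sum>j\<in>J. c j * \<phi> j x) \<in> U_fun"
  using assms
proof (induction J rule: finite_induct)
  case empty
  show ?case using U_fun_zero by simp
next
  case (insert j J)
  then show ?case by (simp add: U_fun_add U_fun_scale)
qed

lemma supp_lincomb_subset: "supp (\<lambda>x. \<Sum>j\<in>J. c j * \<phi> j x) \<subseteq> (\<Union>j\<in>J. supp (\<phi> j))"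
proof
  fix x
  assume "x \<in> supp (\<lambda>x. \<Sum>j\<in>J. c j * \<phi> j x)"
  then have "(\<Sum>j\<in>J. c j * \<phi> j x) \<noteq> 0" by (simp add: supp_def)
  then obtain j where "j \<in> J" "c j * \<phi> j x \<noteq> 0"
    by (rule sum.not_neutral_contains_not_neutral)
  then show "x \<in> (\<Union>j\<in>J. supp (\<phi> j))" by (auto simp: supp_def)
qed

lemma finite_vec_componentwise:
  fixes A :: "'d::finite \<Rightarrow> int set"
  assumes "\<And>i. finite (A i)"
  shows "finite {k :: int ^ 'd. \<forall>i. k $ i \<in> A i}"
proof -
  have "{k :: int ^ 'd. \<forall>i. k $ i \<in> A i} \<subseteq> (\<lambda>f. \<chi> i. f i) ` (Pi\<^sub>E UNIV A)"
  proof
    fix k :: "int ^ 'd"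
    assume "k \<in> {k. \<forall>i. k $ i \<in> A i}"
    then have "(\<lambda>i. k $ i) \<in> Pi\<^sub>E UNIV A" by auto
    then show "k \<in> (\<lambda>f. \<chi> i. f i) ` (Pi\<^sub>E UNIV A)"
      by (rule rev_image_eqI) simp
  qed
  moreover have "finite (Pi\<^sub>E (UNIV :: 'd set) A)"
    using assms by (intro finite_PiE) auto
  ultimately show ?thesis by (meson finite_imageI finite_subset)
qed

lemma finite_scale_lattice_in_box_oc:
  assumes "n > 0"
  shows "finite {k. scale_lattice k n \<in> box_oc a b}"
proof -
  have "k $ i \<in> {\<lfloor>real n * a $ i\<rfloor> .. \<lceil>real n * b $ i\<rceil>}"
    if "scale_lattice k n \<in> box_oc a b" for k i
  proof -
    have "real n * a $ i < k $ i" "k $ i \<le> real n * b $ i"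
      using that assms by (auto simp: box_oc_def scale_lattice_def field_simps)
    then show ?thesis by (simp add: floor_le_iff le_ceiling_iff)
  qed
  then have "{k. scale_lattice k n \<in> box_oc a b}
      \<subseteq> {k. \<forall>i. k $ i \<in> {\<lfloor>real n * a $ i\<rfloor> .. \<lceil>real n * b $ i\<rceil>}}"
    by blast
  then show ?thesis
    by (rule finite_subset) (intro finite_vec_componentwise finite_atLeastAtMost_int)
qed

lemma U_fun_finite_lattice_support:
  fixes \<phi> :: "real ^ 'd \<Rightarrow> real"
  assumes "\<phi> \<in> U_fun" "n > 0"
  shows "finite {k. \<phi> (scale_lattice k n) \<noteq> 0}"
proof -
  obtain m c and a b :: "nat \<Rightarrow> real ^ 'd"
    where \<phi>: "\<phi> = (\<lambda>x. \<Sum>j<m. c j * indicator (box_oc (a j) (b j)) x)"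
    using assms(1) by (blast elim: U_funE)
  have "supp \<phi> \<subseteq> (\<Union>j<m. supp (indicator (box_oc (a j) (b j))))"
    unfolding \<phi> by (rule supp_lincomb_subset)
  then have "{k. \<phi> (scale_lattice k n) \<noteq> 0} \<subseteq> (\<Union>j<m. {k. scale_lattice k n \<in> box_oc (a j) (b j)})"
    by (auto simp: supp_def indicator_def)
  then show ?thesis
    by (rule finite_subset) (simp add: finite_scale_lattice_in_box_oc assms(2))
qed

lemma S_n_eq_sum_superset:
  assumes "finite F" "{k. \<phi> (scale_lattice k n) \<noteq> 0} \<subseteq> F"
  shows "S_n \<zeta> n \<phi> \<omega> = real n powr (- real CARD('d) / 2) *
      (\<Sum>k\<in>F. \<zeta> k \<omega> * \<phi> (scale_lattice (k :: int ^ 'd) n))"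
  unfolding S_n_def
  by (rule arg_cong[where f = "\<lambda>x. _ * x"], rule sum.mono_neutral_left) (use assms in auto)

lemma S_n_lincomb:
  fixes \<zeta> :: "int ^ 'd \<Rightarrow> 'a \<Rightarrow> real"
  assumes "finite J" "\<And>j. j \<in> J \<Longrightarrow> \<phi> j \<in> U_fun" "n > 0"
  shows "S_n \<zeta> n (\<lambda>x. \<Sum>j\<in>J. c j * \<phi> j x) \<omega> = (\<Sum>j\<in>J. c j * S_n \<zeta> n (\<phi> j) \<omega>)"
proof -
  define F where "F = (\<Union>j\<in>J. {k. \<phi> j (scale_lattice k n) \<noteq> 0})"
  have F: "finite F"
    unfolding F_def using assms by (simp add: U_fun_finite_lattice_support)
  have lincomb_F: "{k. (\<Sum>j\<in>J. c j * \<phi> j (scale_lattice k n)) \<noteq> 0} \<subseteq> F"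
    using supp_lincomb_subset[of c \<phi> J] unfolding F_def supp_def by blast
  have \<phi>_F: "{k. \<phi> j (scale_lattice k n) \<noteq> 0} \<subseteq> F" if "j \<in> J" for j
    unfolding F_def using that by auto
  let ?P = "real n powr (- real CARD('d) / 2)"
  have "S_n \<zeta> n (\<lambda>x. \<Sum>j\<in>J. c j * \<phi> j x) \<omega>
      = ?P * (\<Sum>k\<in>F. \<zeta> k \<omega> * (\<Sum>j\<in>J. c j * \<phi> j (scale_lattice k n)))"
    by (rule S_n_eq_sum_superset[OF F lincomb_F])
  also have "\<dots> = ?P * (\<Sum>j\<in>J. \<Sum>k\<in>F. c j * (\<zeta> k \<omega> * \<phi> j (scale_lattice k n)))"
    by (simp only: sum_distrib_left mult.left_commute sum.swap[of _ F J])
  also have "\<dots> = (\<Sum>j\<in>J. c j * (?P * (\<Sum>k\<in>F. \<zeta> k \<omega> * \<phi> j (scale_lattice k n))))"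
    by (simp only: sum_distrib_left mult.left_commute)
  also have "\<dots> = (\<Sum>j\<in>J. c j * S_n \<zeta> n (\<phi> j) \<omega>)"
    by (intro sum.cong refl) (simp only: S_n_eq_sum_superset[OF F \<phi>_F])
  finally show ?thesis .
qed

lemma le_sep_UN:
  assumes "\<And>i j. i \<in> I \<Longrightarrow> j \<in> J \<Longrightarrow> d \<le> sep (A i) (B j)"
  shows "d \<le> sep (\<Union>i\<in>I. A i) (\<Union>j\<in>J. B j)"
  unfolding sep_def
proof (rule INF_greatest)
  fix p
  assume "p \<in> (\<Union>i\<in>I. A i) \<times> (\<Union>j\<in>J. B j)"
  then obtain i j where "i \<in> I" "j \<in> J" "p \<in> A i \<times> B j" by auto
  then have "sep (A i) (B j) \<le> ereal (Max (range (\<lambda>l. \<bar>fst p $ l - snd p $ l\<bar>)))"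
    unfolding sep_def by (intro INF_lower)
  with assms[OF \<open>i \<in> I\<close> \<open>j \<in> J\<close>] show "d \<le> ereal (Max (range (\<lambda>l. \<bar>fst p $ l - snd p $ l\<bar>)))"
    by (rule order_trans)
qed

lemma sep_antimono:
  assumes "A \<subseteq> A'" "B \<subseteq> B'"
  shows "sep A' B' \<le> sep A B"
  unfolding sep_def using assms by (intro INF_superset_mono) auto

lemma asymp_indep_S_n_lincomb_pair:
  fixes \<zeta> :: "int ^ 'd \<Rightarrow> 'a \<Rightarrow> real" and \<phi> :: "nat \<Rightarrow> real ^ 'd \<Rightarrow> real"
  assumes pair_indep: "\<And>\<psi>1 \<psi>2. \<psi>1 \<in> U_fun \<Longrightarrow> \<psi>2 \<in> U_fun \<Longrightarrow> sep (supp \<psi>1) (supp \<psi>2) \<ge> ereal \<delta> \<Longrightarrow>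
           asymp_indep M 2 (\<lambda>j n. S_n \<zeta> n (if j = 0 then \<psi>1 else \<psi>2))"
    and "finite I" "finite J" "\<And>i. i \<in> I \<union> J \<Longrightarrow> \<phi> i \<in> U_fun"
    and "\<And>i j. i \<in> I \<Longrightarrow> j \<in> J \<Longrightarrow> ereal \<delta> \<le> sep (supp (\<phi> i)) (supp (\<phi> j))"
  shows "asymp_indep M 2 (\<lambda>k n \<omega>. if k = 0 then \<Sum>i\<in>I. \<xi> i * S_n \<zeta> n (\<phi> i) \<omega>
                                         else \<Sum>j\<in>J. \<xi> j * S_n \<zeta> n (\<phi> j) \<omega>)"
proof -
  define \<psi> where "\<psi> K = (\<lambda>x. \<Sum>i\<in>K. \<xi> i * \<phi> i x)" for K
  have U: "\<psi> I \<in> U_fun" "\<psi> J \<in> U_fun"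
    unfolding \<psi>_def using assms(2-4) by (auto intro: U_fun_lincomb)
  have "ereal \<delta> \<le> sep (\<Union>i\<in>I. supp (\<phi> i)) (\<Union>j\<in>J. supp (\<phi> j))"
    using assms(5) by (rule le_sep_UN)
  also have "\<dots> \<le> sep (supp (\<psi> I)) (supp (\<psi> J))"
    unfolding \<psi>_def by (intro sep_antimono supp_lincomb_subset)
  finally have "asymp_indep M 2 (\<lambda>k n. S_n \<zeta> n (if k = 0 then \<psi> I else \<psi> J))"
    using pair_indep U by blast
  moreover have "\<forall>\<^sub>F n in sequentially. \<forall>k<(2 :: nat). S_n \<zeta> n (if k = 0 then \<psi> I else \<psi> J) =
      (\<lambda>\<omega>. if k = 0 then \<Sum>i\<in>I. \<xi> i * S_n \<zeta> n (\<phi> i) \<omega> else \<Sum>j\<in>J. \<xi> j * S_n \<zeta> n (\<phi> j) \<omega>)"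
    using eventually_gt_at_top[of 0]
    by eventually_elim (use assms(2-4) in \<open>auto simp: \<psi>_def S_n_lincomb\<close>)
  ultimately show ?thesis
    by (rule asymp_indep_eventually_cong[THEN iffD1, rotated])
qed

theorem lemma2p6:
  fixes M :: "'a measure" and \<zeta> :: "int ^ 'd \<Rightarrow> 'a \<Rightarrow> real" and \<delta> :: real
  assumes "prob_space M"
    and "\<And>k. \<zeta> k \<in> borel_measurable M"
    and "stationary_field M \<zeta>"
    and "integrable M (\<zeta> 0)" and "(LINT \<omega>|M. \<zeta> 0 \<omega>) = 0"
    and "integrable M (\<lambda>\<omega>. (\<zeta> 0 \<omega>)\<^sup>2)"
    and "\<delta> > 0"
    and "\<And>\<psi>1 \<psi>2. \<psi>1 \<in> U_fun \<Longrightarrow> \<psi>2 \<in> U_fun \<Longrightarrow> sep (supp \<psi>1) (supp \<psi>2) \<ge> ereal \<delta> \<Longrightarrow>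
           asymp_indep M 2 (\<lambda>j n. S_n \<zeta> n (if j = 0 then \<psi>1 else \<psi>2))"
  shows "\<forall>(N::nat) (\<phi>::nat \<Rightarrow> real ^ 'd \<Rightarrow> real). N \<ge> 2 \<longrightarrow> (\<forall>j<N. \<phi> j \<in> U_fun) \<longrightarrow>
           (\<forall>i<N. \<forall>j<N. i \<noteq> j \<longrightarrow> sep (supp (\<phi> i)) (supp (\<phi> j)) \<ge> ereal \<delta>) \<longrightarrow>
           asymp_indep M N (\<lambda>j n. S_n \<zeta> n (\<phi> j))"
proof (intro allI impI)
  fix N :: nat and \<phi> :: "nat \<Rightarrow> real ^ 'd \<Rightarrow> real"
  assume "N \<ge> 2" "\<forall>j<N. \<phi> j \<in> U_fun"
    "\<forall>i<N. \<forall>j<N. i \<noteq> j \<longrightarrow> sep (supp (\<phi> i)) (supp (\<phi> j)) \<ge> ereal \<delta>"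
  then show "asymp_indep M N (\<lambda>j n. S_n \<zeta> n (\<phi> j))"
  proof (induction N rule: dec_induct)
    case base
    then have "asymp_indep M 2 (\<lambda>j n. S_n \<zeta> n (if j = 0 then \<phi> 0 else \<phi> 1))"
      by (intro assms(8)) auto
    then show ?case
      by (subst (asm) asymp_indep_eventually_cong) (auto simp: less_2_cases_iff)
  next
    case (step N)
    show ?case
    proof (rule asymp_indep_SucI[OF assms(1)])
      show "asymp_indep M N (\<lambda>j n. S_n \<zeta> n (\<phi> j))"
        using step by simp
      fix \<xi>
      have "asymp_indep M 2 (\<lambda>j n \<omega>. if j = 0 then \<Sum>i\<in>{..<N}. \<xi> i * S_n \<zeta> n (\<phi> i) \<omega>
                                      else \<Sum>i\<in>{N}. \<xi> i * S_n \<zeta> n (\<phi> i) \<omega>)"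
        by (rule asymp_indep_S_n_lincomb_pair[where \<delta> = \<delta>, OF assms(8)]) (use step.prems in auto)
      then show "asymp_indep M 2 (\<lambda>j n \<omega>. if j = 0 then \<Sum>i<N. \<xi> i * S_n \<zeta> n (\<phi> i) \<omega>
                                           else \<xi> N * S_n \<zeta> n (\<phi> N) \<omega>)"
        by (simp cong: if_cong)
    qed
  qed
qed

end
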